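(* Let $k>1$, let $n=2m$ be even, and let $f:\mathbb{F}_2^n\to\mathbb{Z}_{2^k}$. For $\mathbf{u}\in\mathbb{F}_2^n$ let $f_{\mathbf{u}}(\mathbf{x})=f(\mathbf{x})+2^{k-1}(\mathbf{u}\cdot\mathbf{x})\in\mathbb{Z}_{2^k}$ and $b_j^{(\mathbf{u})}=|\{\mathbf{x}\in\mathbb{F}_2^n: f_{\mathbf{u}}(\mathbf{x})=j\}|$ for $0\le j\le 2^k-1$. Then $f$ is gbent if and only if for every $\mathbf{u}\in\mathbb{F}_2^n$ there exists an integer $\rho_{\mathbf{u}}$ with $0\le\rho_{\mathbf{u}}\le 2^{k-1}-1$ such that $b^{(\mathbf{u})}_{2^{k-1}+\rho_{\mathbf{u}}}=b^{(\mathbf{u})}_{\rho_{\mathbf{u}}}\pm 2^m$ and $b^{(\mathbf{u})}_{2^{k-1}+j}=b^{(\mathbf{u})}_j$ for all $0\le j\le 2^{k-1}-1$ with $j\ne\rho_{\mathbf{u}}$.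
   Context: For an integer $q\ge 2$, $\zeta_q=e^{2\pi i/q}$. The generalized Walsh–Hadamard transform of $f:\mathbb{F}_2^n\to\mathbb{Z}_q$ is $\mathcal{H}^{(q)}_f(\mathbf{u})=\sum_{\mathbf{x}\in\mathbb{F}_2^n}\zeta_q^{f(\mathbf{x})}(-1)^{\mathbf{u}\cdot\mathbf{x}}$, with $\mathbf{u}\cdot\mathbf{x}$ the usual dot product over $\mathbb{F}_2$; $f$ is gbent if $|\mathcal{H}^{(q)}_f(\mathbf{u})|=2^{n/2}$ for all $\mathbf{u}$. Here $q=2^k$. *)

theory Defs
  imports "HOL-Analysis.Analysis"
begin

text \<open>Vectors of F_2^n are modelled as functions nat => bool vanishing outside {0..<n}.\<close>
definition bvecs :: "nat \<Rightarrow> (nat \<Rightarrow> bool) set" where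
  "bvecs n = {x. \<forall>i. n \<le> i \<longrightarrow> \<not> x i}"

definition dotp :: "nat \<Rightarrow> (nat \<Rightarrow> bool) \<Rightarrow> (nat \<Rightarrow> bool) \<Rightarrow> nat" where
  "dotp n u x = card {i. i < n \<and> u i \<and> x i} mod 2"

text \<open>Elements of Z_q are represented by integers, read modulo q.\<close>
definition zeta :: "nat \<Rightarrow> int \<Rightarrow> complex" where
  "zeta q a = cis (2 * pi * real_of_int a / real q)"

definition gwht :: "nat \<Rightarrow> nat \<Rightarrow> ((nat \<Rightarrow> bool) \<Rightarrow> int) \<Rightarrow> (nat \<Rightarrow> bool) \<Rightarrow> complex" where
  "gwht q n f u = (\<Sum>x\<in>bvecs n. zeta q (f x) * (-1) ^ dotp n u x)"

definition gbent :: "nat \<Rightarrow> nat \<Rightarrow> ((nat \<Rightarrow> bool) \<Rightarrow> int) \<Rightarrow> bool" where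
  "gbent q n f \<longleftrightarrow> (\<forall>u\<in>bvecs n. cmod (gwht q n f u) = sqrt (2 ^ n))"

definition fshift :: "nat \<Rightarrow> nat \<Rightarrow> ((nat \<Rightarrow> bool) \<Rightarrow> int) \<Rightarrow> (nat \<Rightarrow> bool) \<Rightarrow> (nat \<Rightarrow> bool) \<Rightarrow> int" where
  "fshift k n f u x = (f x + 2 ^ (k - 1) * int (dotp n u x)) mod 2 ^ k"

definition bcount :: "nat \<Rightarrow> nat \<Rightarrow> ((nat \<Rightarrow> bool) \<Rightarrow> int) \<Rightarrow> (nat \<Rightarrow> bool) \<Rightarrow> int \<Rightarrow> int" where
  "bcount k n f u j = int (card {x \<in> bvecs n. fshift k n f u x = j})"

end

theory Submission
  imports Defs "HOL-Computational_Algebra.Polynomial"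
begin

(* Put N = 2^(k-1) and let zeta = exp(i pi / N), a primitive 2N-th root of unity.  Grouping the
   Walsh-Hadamard sum by the value of f_u and using zeta^N = -1 gives
   H_f(u) = sum_{j<N} (b_j - b_{N+j}) zeta^j.  Since X^N + 1 is irreducible over the integers
   (Eisenstein at 2 after X |-> X - 1), the powers 1, zeta, ..., zeta^(N-1) are linearly
   independent, and the theorem reduces to: an element x of Z[zeta] with |x|^2 = 4^m is
   +-2^m zeta^r.  For this, lam = 1 - zeta generates a prime ideal with (2) = (lam)^N, and
   cnj lam is a unit multiple of lam; so x * cnj x = 4^m forces 2 | x.  Descending on m leaves
   y with y * cnj y = 1, and the constant coefficient of y * cnj y is the sum of the squares
   of the coefficients of y, so y = +-zeta^r. *)

lemma one_plus_X_power_two_power: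
  "\<exists>R::int poly. [:1,1:] ^ (2 ^ e) = monom 1 (2 ^ e) + 1 + smult 2 R"
proof (induction e)
  case 0
  show ?case by (rule exI[of _ 0]) (simp add: monom_Suc one_pCons)
next
  case (Suc e)
  then obtain R where R: "[:1,1:] ^ (2 ^ e) = monom (1::int) (2 ^ e) + 1 + smult 2 R"
    by blast
  have "[:1::int,1:] ^ (2 ^ Suc e) = (monom 1 (2 ^ e) + 1 + smult 2 R) ^ 2"
    by (simp add: R[symmetric] power_mult[symmetric] mult.commute)
  also have "\<dots> = monom 1 (2 ^ e) * monom 1 (2 ^ e) + 1 +
      smult 2 (monom 1 (2 ^ e) + smult 2 (R * (monom 1 (2 ^ e) + 1)) + smult 2 (R * R))"
    by (simp add: power2_eq_square algebra_simps numeral_mult_conv_smult[symmetric])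
  also have "monom (1::int) (2 ^ e) * monom 1 (2 ^ e) = monom 1 (2 ^ Suc e)"
    by (simp add: mult_monom mult_2)
  finally show ?case by blast
qed

lemma eisenstein_at_2_odd_constant_factor:
  fixes g h F :: "int poly"
  assumes gh: "g * h = F" and F_even: "\<forall>i<degree F. even (coeff F i)"
    and F0: "coeff F 0 = 2" and F_lead: "odd (lead_coeff F)" and g0: "odd (coeff g 0)"
  shows "degree g = 0"
proof (rule ccontr)
  assume dg: "degree g \<noteq> 0"
  have "coeff g 0 * coeff h 0 = 2" using gh F0 by (metis coeff_mult_0)
  hence h0: "even (coeff h 0)" using g0 by (metis even_mult_iff even_numeral)
  have "g \<noteq> 0" "h \<noteq> 0" using gh F0 by auto
  hence deg: "degree g + degree h = degree F" using gh by (metis degree_mult_eq)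
  have "odd (lead_coeff h)" using F_lead gh by (metis lead_coeff_mult even_mult_iff)
  define s where "s = (LEAST i. odd (coeff h i))"
  have hs: "odd (coeff h s)" and s_le: "s \<le> degree h"
    unfolding s_def using \<open>odd (lead_coeff h)\<close> by (metis LeastI, metis Least_le)
  have h_low: "even (coeff h i)" if "i < s" for i
    using not_less_Least[OF that[unfolded s_def]] by simp
  obtain s' where s': "s = Suc s'" using hs h0 by (cases s) auto
  have "coeff F s = coeff g 0 * coeff h s + (\<Sum>i\<le>s'. coeff g (Suc i) * coeff h (s - Suc i))"
    unfolding gh[symmetric] coeff_mult s' sum.atMost_Suc_shift by simp
  moreover have "even (\<Sum>i\<le>s'. coeff g (Suc i) * coeff h (s - Suc i))"
    by (rule dvd_sum) (use h_low s' in auto)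
  ultimately have "odd (coeff F s)" using g0 hs by simp
  moreover have "s < degree F" using s_le deg dg by linarith
  ultimately show False using F_even by blast
qed

lemma eisenstein_at_2_no_proper_factor:
  fixes g h F :: "int poly"
  assumes "g * h = F" and "\<forall>i<degree F. even (coeff F i)"
    and "coeff F 0 = 2" and "odd (lead_coeff F)"
  shows "degree g = 0 \<or> degree h = 0"
proof -
  have gh0: "coeff g 0 * coeff h 0 = 2" using assms(1,3) by (metis coeff_mult_0)
  have "odd (coeff g 0) \<or> odd (coeff h 0)"
  proof (rule ccontr)
    assume "\<not> ?thesis"
    hence "2 * 2 dvd coeff g 0 * coeff h 0" by (intro mult_dvd_mono) auto
    thus False using gh0 by simp
  qed
  thus ?thesis
    using eisenstein_at_2_odd_constant_factor[of g h F] eisenstein_at_2_odd_constant_factor[of h g F]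
      assms by (auto simp: mult.commute)
qed

lemma map_poly_of_int_add:
  "map_poly (of_int :: int \<Rightarrow> 'a::comm_ring_1) (p + q) = map_poly of_int p + map_poly of_int q"
  by (rule poly_eqI) (simp add: coeff_map_poly)

lemma map_poly_of_int_mult:
  "map_poly (of_int :: int \<Rightarrow> 'a::comm_ring_1) (p * q) = map_poly of_int p * map_poly of_int q"
  by (rule poly_eqI) (simp add: coeff_map_poly coeff_mult)

lemma map_poly_of_int_smult:
  "map_poly (of_int :: int \<Rightarrow> 'a::comm_ring_1) (smult c p) = smult (of_int c) (map_poly of_int p)"
  by (rule poly_eqI) (simp add: coeff_map_poly)

lemma map_poly_of_int_power:
  "map_poly (of_int :: int \<Rightarrow> 'a::comm_ring_1) (p ^ n) = map_poly of_int p ^ n"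
  by (induction n) (simp_all add: map_poly_of_int_mult)

lemma pcompose_power: "pcompose (p ^ n) r = pcompose p r ^ n"
  by (induction n) (simp_all add: pcompose_mult pcompose_1)

lemma sum_squares_eq_1_int:
  fixes b :: "nat \<Rightarrow> int"
  assumes "(\<Sum>j<n. (b j)\<^sup>2) = 1"
  shows "\<exists>r<n. (b r = 1 \<or> b r = -1) \<and> (\<forall>j<n. j \<noteq> r \<longrightarrow> b j = 0)"
proof -
  obtain r where r: "r < n" "b r \<noteq> 0"
    using assms by (metis (no_types, lifting) lessThan_iff sum.neutral zero_neq_one power_zero_numeral)
  have split: "(\<Sum>j<n. (b j)\<^sup>2) = (b r)\<^sup>2 + (\<Sum>j\<in>{..<n}-{r}. (b j)\<^sup>2)"
    using r by (simp add: sum.remove)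
  have "(b r)\<^sup>2 \<ge> 1" using r(2) by (simp add: int_one_le_iff_zero_less)
  moreover have "(\<Sum>j\<in>{..<n}-{r}. (b j)\<^sup>2) \<ge> 0" by (simp add: sum_nonneg)
  ultimately have "(b r)\<^sup>2 = 1" and rest: "(\<Sum>j\<in>{..<n}-{r}. (b j)\<^sup>2) = 0"
    using assms split by linarith+
  hence "b r = 1 \<or> b r = -1" by (simp add: power2_eq_1_iff)
  moreover have "\<forall>j<n. j \<noteq> r \<longrightarrow> b j = 0"
    using rest by (subst (asm) sum_nonneg_eq_0_iff) auto
  ultimately show ?thesis using r by blast
qed

lemma sum_lessThan_add: "(\<Sum>j<(A::nat) + B. f j) = (\<Sum>j<A. f j) + (\<Sum>j<B. f (A + j))"
  by (induction B) (simp_all add: add.assoc)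

lemma finite_bvecs: "finite (bvecs n)"
proof (rule finite_subset)
  show "bvecs n \<subseteq> (\<lambda>S i. i \<in> S) ` Pow {..<n}"
  proof
    fix x assume "x \<in> bvecs n"
    hence "x = (\<lambda>i. i \<in> {i. x i})" "{i. x i} \<in> Pow {..<n}"
      unfolding bvecs_def by (auto simp: not_le[symmetric])
    thus "x \<in> (\<lambda>S i. i \<in> S) ` Pow {..<n}" by blast
  qed
qed simp

lemma zeta_add: "zeta q (a + b) = zeta q a * zeta q b"
  unfolding zeta_def by (simp add: cis_mult add_divide_distrib distrib_left)

lemma zeta_mult_of_nat: "zeta q (c * int d) = zeta q c ^ d"
  unfolding zeta_def Complex.DeMoivre by (rule arg_cong[where f = cis]) (simp add: field_simps)

locale two_power_cyclotomic =
  fixes e :: nat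
  assumes e_pos: "1 \<le> e"
begin

definition N :: nat where "N = 2 ^ e"

definition \<zeta> :: complex where "\<zeta> = cis (pi / real N)"

lemma N_even: "even N"
  using e_pos unfolding N_def by (cases e) auto

lemma N_ge_2: "N \<ge> 2"
  using e_pos unfolding N_def by (metis power_increasing power_one_right zero_less_numeral one_le_numeral)

lemma zeta_pow_N: "\<zeta> ^ N = -1"
  using N_ge_2 by (simp add: \<zeta>_def Complex.DeMoivre)

lemma zeta_pow_2N: "\<zeta> ^ (2 * N) = 1"
proof -
  have "\<zeta> ^ (2 * N) = (\<zeta> ^ N) ^ 2" by (simp add: power_mult[symmetric] mult.commute)
  thus ?thesis by (simp add: zeta_pow_N)
qed

lemma zeta_neq_1: "\<zeta> \<noteq> 1"
  using zeta_pow_N N_ge_2 by auto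

lemma zeta_nonzero: "\<zeta> \<noteq> 0"
proof
  assume "\<zeta> = 0"
  hence "\<zeta> ^ (2 * N) = 0" using N_ge_2 by simp
  thus False using zeta_pow_2N by simp
qed

lemma norm_zeta: "norm \<zeta> = 1"
  by (simp add: \<zeta>_def)

lemma cnj_zeta_mult_zeta: "cnj \<zeta> * \<zeta> = 1"
  using complex_norm_square[of \<zeta>] norm_zeta by (simp add: mult.commute)

definition eval :: "int poly \<Rightarrow> complex" where
  "eval p = poly (map_poly of_int p) \<zeta>"

lemma eval_add: "eval (p + q) = eval p + eval q"
  by (simp add: eval_def map_poly_of_int_add)

lemma eval_mult: "eval (p * q) = eval p * eval q"
  by (simp add: eval_def map_poly_of_int_mult)

lemma eval_smult: "eval (smult c p) = of_int c * eval p"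
  by (simp add: eval_def map_poly_of_int_smult)

lemma eval_const: "eval [:c:] = of_int c"
  by (cases "c = 0") (simp_all add: eval_def map_poly_pCons)

definition \<Phi> :: "int poly" where "\<Phi> = monom 1 N + 1"

lemma eval_\<Phi>: "eval \<Phi> = 0"
  using eval_const[of 1] by (simp add: \<Phi>_def eval_def map_poly_of_int_add map_poly_monom
      poly_monom zeta_pow_N one_pCons)

lemma degree_\<Phi>: "degree \<Phi> = N"
  using N_ge_2 unfolding \<Phi>_def by (simp add: degree_add_eq_left degree_monom_eq one_pCons)

lemma content_\<Phi>: "content \<Phi> = 1"
proof -
  have "coeff \<Phi> 0 = 1" using N_ge_2 by (simp add: \<Phi>_def)
  hence "is_unit (content \<Phi>)" by (metis content_dvd_coeff)
  thus ?thesis by (metis is_unit_normalize normalize_content)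
qed

(* Eisenstein at 2 applies to Phi(X - 1): it is X^N modulo 2 and its constant term is Phi(-1) = 2. *)
lemma \<Phi>_no_proper_factor:
  assumes "\<Phi> = P * Q"
  shows "degree P = 0 \<or> degree Q = 0"
proof -
  define F where "F = pcompose \<Phi> [:-1,1:]"
  obtain R where "[:1,1:] ^ N = monom (1::int) N + 1 + smult 2 R"
    using one_plus_X_power_two_power unfolding N_def by blast
  hence "\<Phi> = [:1,1:] ^ N - smult 2 R" unfolding \<Phi>_def by simp
  moreover have "pcompose [:1::int,1:] [:-1,1:] = [:0,1:]"
    by (simp add: pcompose_pCons one_pCons)
  ultimately have "F = [:0,1:] ^ N - smult 2 (pcompose R [:-1,1:])"
    unfolding F_def by (simp add: pcompose_diff pcompose_smult pcompose_power)
  hence F: "F = monom 1 N - smult 2 (pcompose R [:-1,1:])"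
    by (simp add: monom_altdef)
  have deg_F: "degree F = N" unfolding F_def by (simp add: degree_pcompose degree_\<Phi>)
  have "coeff F 0 = poly F 0" by (simp add: poly_0_coeff_0)
  also have "\<dots> = poly \<Phi> (-1)" unfolding F_def by (simp add: poly_pcompose)
  also have "\<dots> = 2" using N_even by (simp add: \<Phi>_def poly_monom)
  finally have F0: "coeff F 0 = 2" .
  have "pcompose P [:-1,1:] * pcompose Q [:-1,1:] = F"
    unfolding F_def assms pcompose_mult ..
  moreover have "\<forall>i<degree F. even (coeff F i)" "odd (lead_coeff F)"
    unfolding deg_F unfolding F by (auto simp: coeff_monom)
  ultimately have "degree (pcompose P [:-1,1:]) = 0 \<or> degree (pcompose Q [:-1,1:]) = 0"
    using F0 by (intro eisenstein_at_2_no_proper_factor)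
  thus ?thesis by (simp add: degree_pcompose)
qed

lemma \<Phi>_multiple_no_proper_factor:
  assumes PQ: "smult c \<Phi> = P * Q" and c: "c \<noteq> 0"
  shows "degree P = 0 \<or> degree Q = 0"
proof -
  define P' Q' where "P' = primitive_part P" and "Q' = primitive_part Q"
  have PQ': "P * Q = smult (content P * content Q) (P' * Q')"
    unfolding P'_def Q'_def
    by (metis content_times_primitive_part mult_smult_left mult_smult_right smult_smult)
  have "content (smult c \<Phi>) = content (P * Q)" using PQ by simp
  hence cPQ: "\<bar>c\<bar> = content P * content Q" by (simp add: content_mult content_\<Phi>)
  have "smult \<bar>c\<bar> (smult (sgn c) \<Phi>) = smult c \<Phi>" by (simp add: abs_mult_sgn)
  also have "\<dots> = smult \<bar>c\<bar> (P' * Q')" using PQ PQ' cPQ by simp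
  finally have sgn_\<Phi>: "smult (sgn c) \<Phi> = P' * Q'" using c by (metis smult_cancel abs_0_eq)
  have "sgn c * sgn c = 1" using c by (simp add: sgn_if)
  hence "\<Phi> = smult (sgn c) (smult (sgn c) \<Phi>)" by (simp only: smult_smult smult_1_left)
  hence "\<Phi> = P' * smult (sgn c) Q'" by (simp add: sgn_\<Phi> mult_smult_right)
  hence "degree P' = 0 \<or> degree (smult (sgn c) Q') = 0" by (rule \<Phi>_no_proper_factor)
  thus ?thesis using c by (auto simp: P'_def Q'_def sgn_if split: if_splits)
qed

(* For P of minimal degree with eval P = 0, the pseudo-remainder of Phi by P vanishes by minimality,
   so P divides a multiple of Phi. *)
theorem eval_nonzero:
  assumes "P \<noteq> 0" and "degree P < N"
  shows "eval P \<noteq> 0"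
  using assms
proof (induction "degree P" arbitrary: P rule: less_induct)
  case less
  show ?case
  proof
    assume EP: "eval P = 0"
    have "degree P \<noteq> 0"
    proof
      assume "degree P = 0"
      hence "P = [:coeff P 0:]" by (metis degree_0_id)
      thus False using EP less.prems(1) eval_const by (metis of_int_eq_0_iff pCons_0_0)
    qed
    obtain Q R where qr: "pseudo_divmod \<Phi> P = (Q, R)" by (metis surj_pair)
    define c where "c = lead_coeff P ^ (Suc (degree \<Phi>) - degree P)"
    have div: "smult c \<Phi> = P * Q + R" and R: "R = 0 \<or> degree R < degree P"
      using pseudo_divmod[OF less.prems(1) qr] unfolding c_def by auto
    have "eval R = 0" using arg_cong[OF div, of eval]
      by (simp add: eval_smult eval_\<Phi> eval_add eval_mult EP)
    hence "R = 0" using R less.hyps less.prems(2) by fastforce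
    have "c \<noteq> 0" unfolding c_def using less.prems(1) by simp
    hence "degree P = 0 \<or> degree Q = 0"
      using \<Phi>_multiple_no_proper_factor div \<open>R = 0\<close> by simp
    moreover have "degree P + degree Q = N"
    proof -
      have PQ: "P * Q = smult c \<Phi>" using div \<open>R = 0\<close> by simp
      moreover have "\<Phi> \<noteq> 0" using degree_\<Phi> N_ge_2 by auto
      ultimately have "P \<noteq> 0" "Q \<noteq> 0" using \<open>c \<noteq> 0\<close> by auto
      thus ?thesis using PQ degree_\<Phi> \<open>c \<noteq> 0\<close> by (metis degree_mult_eq degree_smult_eq)
    qed
    ultimately show False using \<open>degree P \<noteq> 0\<close> less.prems(2) by linarith
  qed
qed

lemma eval_sum: "eval (sum f A) = (\<Sum>i\<in>A. eval (f i))"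
  by (induction A rule: infinite_finite_induct) (simp_all add: eval_add eval_def[of 0])

lemma eval_monom: "eval (monom c i) = of_int c * \<zeta> ^ i"
  by (simp add: eval_def poly_monom map_poly_monom)

definition comb :: "(nat \<Rightarrow> int) \<Rightarrow> complex" where
  "comb a = (\<Sum>j<N. of_int (a j) * \<zeta> ^ j)"

lemma comb_add: "comb a + comb b = comb (\<lambda>j. a j + b j)"
  by (simp add: comb_def sum.distrib algebra_simps)

lemma comb_scale: "of_int c * comb a = comb (\<lambda>j. c * a j)"
  by (simp add: comb_def sum_distrib_left algebra_simps)

lemma comb_single:
  assumes "j < N"
  shows "comb (\<lambda>i. if i = j then c else 0) = of_int c * \<zeta> ^ j"
proof -
  have "comb (\<lambda>i. if i = j then c else 0) = (\<Sum>i<N. if i = j then of_int c * \<zeta> ^ j else 0)"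
    unfolding comb_def by (intro sum.cong) auto
  also have "\<dots> = of_int c * \<zeta> ^ j" using assms by simp
  finally show ?thesis .
qed

lemma comb_inject:
  assumes "comb a = comb b" and "j < N"
  shows "a j = b j"
proof -
  define P where "P = (\<Sum>i<N. monom (a i - b i) i)"
  have coeff_P: "coeff P i = (if i < N then a i - b i else 0)" for i
    unfolding P_def by (simp add: coeff_sum coeff_monom)
  have "eval P = comb a - comb b"
    by (simp add: P_def eval_sum eval_monom comb_def sum_subtractf algebra_simps)
  hence "eval P = 0" using assms(1) by simp
  moreover have "degree P < N" if "P \<noteq> 0"
  proof (rule ccontr)
    assume "\<not> degree P < N"
    hence "lead_coeff P = 0" using coeff_P by simp
    thus False using that by simp
  qed
  ultimately have "P = 0" using eval_nonzero by blast
  thus ?thesis using coeff_P[of j] assms(2) by simp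
qed

definition in_ring :: "complex \<Rightarrow> bool" where
  "in_ring x \<longleftrightarrow> (\<exists>a. x = comb a)"

lemma in_ring_0: "in_ring 0"
  unfolding in_ring_def by (rule exI[of _ "\<lambda>_. 0"]) (simp add: comb_def)

lemma in_ring_add: "in_ring x \<Longrightarrow> in_ring y \<Longrightarrow> in_ring (x + y)"
  unfolding in_ring_def using comb_add by metis

lemma in_ring_scale: "in_ring x \<Longrightarrow> in_ring (of_int c * x)"
  unfolding in_ring_def using comb_scale by metis

lemma in_ring_neg: "in_ring x \<Longrightarrow> in_ring (- x)"
  using in_ring_scale[of x "-1"] by simp

lemma in_ring_diff: "in_ring x \<Longrightarrow> in_ring y \<Longrightarrow> in_ring (x - y)"
  using in_ring_add in_ring_neg by fastforce

lemma in_ring_sum: "(\<And>i. i \<in> A \<Longrightarrow> in_ring (f i)) \<Longrightarrow> in_ring (sum f A)"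
  by (induction A rule: infinite_finite_induct) (auto simp: in_ring_0 in_ring_add)

lemma in_ring_zeta_power: "in_ring (\<zeta> ^ n)"
proof -
  define r where "r = n mod (2 * N)"
  have "n = 2 * N * (n div (2 * N)) + r" unfolding r_def by simp
  hence "\<zeta> ^ n = (\<zeta> ^ (2 * N)) ^ (n div (2 * N)) * \<zeta> ^ r"
    by (metis power_add power_mult)
  hence \<zeta>_n: "\<zeta> ^ n = \<zeta> ^ r" by (simp add: zeta_pow_2N)
  have "r < 2 * N" unfolding r_def using N_ge_2 by simp
  show ?thesis
  proof (cases "r < N")
    case True
    thus ?thesis unfolding \<zeta>_n in_ring_def using comb_single[OF True, of 1] by (metis mult_1 of_int_1)
  next
    case False
    hence "\<zeta> ^ r = \<zeta> ^ N * \<zeta> ^ (r - N)" by (metis le_add_diff_inverse not_less power_add)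
    hence "\<zeta> ^ r = of_int (-1) * \<zeta> ^ (r - N)" by (simp add: zeta_pow_N)
    thus ?thesis unfolding \<zeta>_n in_ring_def using comb_single[of "r - N" "-1"] \<open>r < 2 * N\<close>
      by (metis less_diff_conv2 not_less False mult_2)
  qed
qed

lemma in_ring_zeta: "in_ring \<zeta>"
  using in_ring_zeta_power[of 1] by simp

lemma in_ring_mult:
  assumes "in_ring x" and "in_ring y"
  shows "in_ring (x * y)"
proof -
  obtain a b where x: "x = comb a" and y: "y = comb b" using assms unfolding in_ring_def by blast
  have "x * y = (\<Sum>i<N. \<Sum>j<N. of_int (a i * b j) * \<zeta> ^ (i + j))"
    unfolding x y comb_def sum_product by (simp add: power_add algebra_simps)
  also have "in_ring \<dots>" by (intro in_ring_sum in_ring_scale in_ring_zeta_power)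
  finally show ?thesis .
qed

lemma in_ring_of_int: "in_ring (of_int c)"
  using in_ring_scale[OF in_ring_zeta_power[of 0], of c] by simp

lemma in_ring_power: "in_ring x \<Longrightarrow> in_ring (x ^ n)"
  using in_ring_of_int[of 1] by (induction n) (auto simp: in_ring_mult)

lemma cnj_zeta: "cnj \<zeta> = \<zeta> ^ (2 * N - 1)"
proof -
  have "\<zeta> ^ (2 * N - 1) * \<zeta> = \<zeta> ^ (2 * N)"
    using N_ge_2 by (simp add: power_Suc2[symmetric])
  hence "\<zeta> ^ (2 * N - 1) * \<zeta> = cnj \<zeta> * \<zeta>" by (simp add: zeta_pow_2N cnj_zeta_mult_zeta)
  thus ?thesis using zeta_nonzero by simp
qed

lemma in_ring_cnj:
  assumes "in_ring x"
  shows "in_ring (cnj x)"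
proof -
  obtain a where "x = comb a" using assms unfolding in_ring_def by blast
  hence "cnj x = (\<Sum>j<N. of_int (a j) * \<zeta> ^ ((2 * N - 1) * j))"
    by (simp add: comb_def cnj_zeta power_mult)
  also have "in_ring \<dots>" by (intro in_ring_sum in_ring_scale in_ring_zeta_power)
  finally show ?thesis .
qed

lemma in_ring_poly:
  assumes "in_ring w"
  shows "in_ring (poly (map_poly of_int p) w)"
proof -
  have "degree (map_poly (of_int :: int \<Rightarrow> complex) p) = degree p"
    by (rule degree_map_poly) simp
  hence "poly (map_poly of_int p) w = (\<Sum>i\<le>degree p. of_int (coeff p i) * w ^ i)"
    by (simp add: poly_altdef coeff_map_poly)
  also have "in_ring \<dots>" by (intro in_ring_sum in_ring_scale in_ring_power assms)
  finally show ?thesis .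
qed

definition ring_dvd :: "complex \<Rightarrow> complex \<Rightarrow> bool" where
  "ring_dvd p x \<longleftrightarrow> (\<exists>y. in_ring y \<and> x = p * y)"

lemma ring_dvd_0: "ring_dvd p 0"
  unfolding ring_dvd_def using in_ring_0 by force

lemma ring_dvd_add: "ring_dvd p x \<Longrightarrow> ring_dvd p y \<Longrightarrow> ring_dvd p (x + y)"
  unfolding ring_dvd_def by (metis in_ring_add distrib_left)

lemma ring_dvd_scale: "ring_dvd p x \<Longrightarrow> ring_dvd p (of_int c * x)"
  unfolding ring_dvd_def by (metis in_ring_scale mult.left_commute)

lemma ring_dvd_diff: "ring_dvd p x \<Longrightarrow> ring_dvd p y \<Longrightarrow> ring_dvd p (x - y)"
  using ring_dvd_add[of p x "of_int (-1) * y"] ring_dvd_scale[of p y "-1"] by simp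

lemma ring_dvd_sum: "(\<And>i. i \<in> A \<Longrightarrow> ring_dvd p (f i)) \<Longrightarrow> ring_dvd p (sum f A)"
  by (induction A rule: infinite_finite_induct) (auto simp: ring_dvd_0 ring_dvd_add)

lemma ring_dvd_mult_right: "ring_dvd p x \<Longrightarrow> in_ring w \<Longrightarrow> ring_dvd p (x * w)"
  unfolding ring_dvd_def by (metis in_ring_mult mult.assoc)

lemma ring_dvd_mult: "ring_dvd p x \<Longrightarrow> ring_dvd q y \<Longrightarrow> ring_dvd (p * q) (x * y)"
  unfolding ring_dvd_def by (metis in_ring_mult mult.assoc mult.left_commute)

lemma ring_dvd_trans: "ring_dvd p q \<Longrightarrow> ring_dvd q x \<Longrightarrow> ring_dvd p x"
  unfolding ring_dvd_def by (metis in_ring_mult mult.assoc)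

lemma ring_dvd_power: "ring_dvd p x \<Longrightarrow> ring_dvd (p ^ n) (x ^ n)"
  unfolding ring_dvd_def by (metis in_ring_power power_mult_distrib)

lemma ring_dvd_power_mono:
  assumes "in_ring p" and "m \<le> n"
  shows "ring_dvd (p ^ m) (p ^ n)"
proof -
  have "p ^ n = p ^ m * p ^ (n - m)" using assms(2) by (simp add: power_add[symmetric])
  thus ?thesis unfolding ring_dvd_def using in_ring_power[OF assms(1)] by blast
qed

definition lam :: complex where "lam = 1 - \<zeta>"

lemma in_ring_lam: "in_ring lam"
  unfolding lam_def using in_ring_diff in_ring_of_int[of 1] in_ring_zeta by simp

lemma lam_nonzero: "lam \<noteq> 0"
  unfolding lam_def using zeta_neq_1 by simp

lemma cnj_lam: "cnj lam = - cnj \<zeta> * lam"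
  unfolding lam_def using cnj_zeta_mult_zeta by (simp add: algebra_simps)

lemma lam_dvd_one_minus_zeta_power: "ring_dvd lam (1 - \<zeta> ^ r)"
  unfolding ring_dvd_def lam_def using one_diff_power_eq[of \<zeta> r]
  by (metis in_ring_sum in_ring_zeta_power)

(* 1 - zeta^(2s) = (1 - zeta^s) (1 - zeta^(s+N)), and s + N = 2^j (r + 2^(e-j)) with an odd cofactor. *)
lemma lam_power_two_power_dvd:
  "j \<le> e \<Longrightarrow> odd r \<Longrightarrow> ring_dvd (lam ^ 2 ^ j) (1 - \<zeta> ^ (2 ^ j * r))"
proof (induction j arbitrary: r)
  case 0
  thus ?case using lam_dvd_one_minus_zeta_power by simp
next
  case (Suc j)
  have odd_r': "odd (r + 2 ^ (e - j))" using Suc.prems by (simp add: Suc_le_eq)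
  have shift: "2 ^ j * (r + 2 ^ (e - j)) = 2 ^ j * r + N"
    unfolding N_def using Suc.prems(1) by (simp add: algebra_simps power_add[symmetric])
  have "2 ^ Suc j * r = 2 ^ j * r + 2 ^ j * r" by simp
  hence "1 - \<zeta> ^ (2 ^ Suc j * r) = 1 - \<zeta> ^ (2 ^ j * r) * \<zeta> ^ (2 ^ j * r)"
    by (simp only: power_add)
  also have "\<dots> = (1 - \<zeta> ^ (2 ^ j * r)) * (1 - \<zeta> ^ (2 ^ j * (r + 2 ^ (e - j))))"
    unfolding shift by (simp add: power_add zeta_pow_N algebra_simps)
  finally have "1 - \<zeta> ^ (2 ^ Suc j * r) = \<dots>" .
  moreover have "ring_dvd (lam ^ 2 ^ j * lam ^ 2 ^ j) \<dots>"
    using Suc.IH[of r] Suc.IH[OF _ odd_r'] Suc.prems by (intro ring_dvd_mult) auto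
  ultimately show ?case by (simp add: power_add[symmetric] mult_2)
qed

lemma lam_power_N_dvd_2: "ring_dvd (lam ^ N) 2"
  using lam_power_two_power_dvd[of e 1] zeta_pow_N unfolding N_def by simp

lemma lam_power_N_eq_2_mult: "\<exists>w. in_ring w \<and> lam ^ N = 2 * w"
proof -
  obtain R where "[:1,1:] ^ N = monom (1::int) N + 1 + smult 2 R"
    using one_plus_X_power_two_power unfolding N_def by blast
  hence "poly (map_poly of_int ([:1,1:] ^ N)) (- \<zeta>) =
      poly (map_poly of_int (monom (1::int) N + 1 + smult 2 R)) (- \<zeta>)"
    by simp
  hence "(1 - \<zeta>) ^ N = (- \<zeta>) ^ N + 1 + 2 * poly (map_poly of_int R) (- \<zeta>)"
    by (simp add: map_poly_of_int_power map_poly_of_int_add map_poly_of_int_smult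
        map_poly_monom poly_monom map_poly_pCons)
  hence "lam ^ N = 2 * poly (map_poly of_int R) (- \<zeta>)"
    using N_even zeta_pow_N by (simp add: lam_def)
  thus ?thesis using in_ring_poly[OF in_ring_neg[OF in_ring_zeta]] by blast
qed

lemma lam_dvd_2: "ring_dvd lam 2"
proof -
  have "ring_dvd lam (lam ^ N)" using ring_dvd_power_mono[OF in_ring_lam, of 1 N] N_ge_2 by simp
  thus ?thesis using lam_power_N_dvd_2 ring_dvd_trans by blast
qed

lemma not_lam_dvd_1: "\<not> ring_dvd lam 1"
proof
  assume "ring_dvd lam 1"
  hence "ring_dvd (lam ^ N) 1" using ring_dvd_power[of lam 1 N] by simp
  then obtain y where y: "in_ring y" "1 = lam ^ N * y" unfolding ring_dvd_def by auto
  obtain w where w: "in_ring w" "lam ^ N = 2 * w" using lam_power_N_eq_2_mult by blast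
  obtain b where b: "w * y = comb b" using in_ring_mult[OF w(1) y(1)] unfolding in_ring_def by blast
  have "comb (\<lambda>j. 2 * b j) = comb (\<lambda>i. if i = 0 then 1 else 0)"
    using comb_scale[of 2 b] comb_single[of 0 1] N_ge_2 y w b by (simp add: mult.assoc)
  hence "2 * b 0 = 1" using comb_inject[of "\<lambda>j. 2 * b j" _ 0] N_ge_2 by simp
  thus False by presburger
qed

lemma lam_dvd_of_int_iff: "ring_dvd lam (of_int c) \<longleftrightarrow> even c"
proof
  assume "even c"
  then obtain t where "c = 2 * t" by blast
  thus "ring_dvd lam (of_int c)" using ring_dvd_scale[OF lam_dvd_2, of t] by (simp add: mult.commute)
next
  assume lam_c: "ring_dvd lam (of_int c)"
  show "even c"
  proof (rule ccontr)
    assume "odd c"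
    then obtain t where t: "c = 2 * t + 1" by (metis oddE)
    have "ring_dvd lam (of_int c - of_int t * 2)"
      using lam_c ring_dvd_scale[OF lam_dvd_2, of t] by (intro ring_dvd_diff)
    thus False using t not_lam_dvd_1 by simp
  qed
qed

lemma lam_congruent_to_int:
  assumes "in_ring x"
  shows "\<exists>c. ring_dvd lam (x - of_int c)"
proof -
  obtain a where x: "x = comb a" using assms unfolding in_ring_def by blast
  have "x - of_int (\<Sum>j<N. a j) = - (\<Sum>j<N. of_int (a j) * (1 - \<zeta> ^ j))"
    unfolding x comb_def by (simp add: algebra_simps sum_subtractf sum_distrib_left)
  also have "ring_dvd lam \<dots>"
    using ring_dvd_scale[OF ring_dvd_sum, of "{..<N}" lam "\<lambda>j. of_int (a j) * (1 - \<zeta> ^ j)" "-1"]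
    by (simp add: ring_dvd_scale lam_dvd_one_minus_zeta_power)
  finally show ?thesis by blast
qed

lemma lam_prime:
  assumes "in_ring x" and "in_ring y" and "ring_dvd lam (x * y)"
  shows "ring_dvd lam x \<or> ring_dvd lam y"
proof -
  obtain c d where c: "ring_dvd lam (x - of_int c)" and d: "ring_dvd lam (y - of_int d)"
    using lam_congruent_to_int assms by blast
  have "x * y - of_int (c * d) = (x - of_int c) * y + of_int c * (y - of_int d)"
    by (simp add: algebra_simps)
  hence "ring_dvd lam (x * y - of_int (c * d))"
    using c d assms(2) by (metis ring_dvd_mult_right ring_dvd_scale ring_dvd_add)
  hence "ring_dvd lam (of_int (c * d))" using assms(3) ring_dvd_diff by fastforce
  hence "even (c * d)" by (simp only: lam_dvd_of_int_iff)
  hence "even c \<or> even d" by simp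
  hence "ring_dvd lam (x - of_int c + of_int c) \<or> ring_dvd lam (y - of_int d + of_int d)"
    using c d ring_dvd_add lam_dvd_of_int_iff by blast
  thus ?thesis by simp
qed

lemma lam_dvd_cnj:
  assumes "in_ring y" and "ring_dvd lam (cnj y)"
  shows "ring_dvd lam y"
proof -
  obtain w where w: "in_ring w" "cnj y = lam * w" using assms unfolding ring_dvd_def by blast
  hence "y = cnj lam * cnj w" by (metis complex_cnj_cnj complex_cnj_mult)
  hence "y = lam * (- cnj \<zeta> * cnj w)" using cnj_lam by simp
  moreover have "in_ring (- cnj \<zeta> * cnj w)"
    using w in_ring_cnj in_ring_zeta in_ring_neg in_ring_mult by blast
  ultimately show ?thesis unfolding ring_dvd_def by blast
qed

lemma lam_power_2N_dvd_four_power: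
  assumes "m \<ge> 1"
  shows "ring_dvd (lam ^ (2 * N)) (4 ^ m)"
proof -
  have "ring_dvd (lam ^ N * lam ^ N) (2 * 2)" using lam_power_N_dvd_2 ring_dvd_mult by blast
  moreover have "lam ^ N * lam ^ N = lam ^ (2 * N)" by (simp add: mult_2 power_add)
  ultimately have "ring_dvd (lam ^ (2 * N)) (4 * 4 ^ (m - 1))"
    using ring_dvd_mult_right in_ring_power[OF in_ring_of_int[of 4]] by fastforce
  moreover have "(4::complex) * 4 ^ (m - 1) = 4 ^ m"
    using assms by (simp add: power_Suc[symmetric])
  ultimately show ?thesis by simp
qed

(* As cnj lam is a unit multiple of lam, x = lam^v y gives x * cnj x = unit * lam^(2v) * y * cnj y;
   since lam^(2N) divides 4^m and v < N, lam divides y * cnj y and hence y. *)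
lemma lam_power_dvd_step:
  assumes norm_x: "x * cnj x = 4 ^ m" and m: "m \<ge> 1"
    and v: "v < N" and dvd: "ring_dvd (lam ^ v) x"
  shows "ring_dvd (lam ^ Suc v) x"
proof -
  obtain y where y: "in_ring y" "x = lam ^ v * y" using dvd unfolding ring_dvd_def by blast
  obtain t where t: "in_ring t" "x * cnj x = lam ^ (2 * N) * t"
    using lam_power_2N_dvd_four_power[OF m] norm_x unfolding ring_dvd_def by auto
  have "lam ^ (2 * N) = lam ^ (2 * v) * lam ^ (2 * N - 2 * v)"
    using v by (simp add: power_add[symmetric])
  hence t': "x * cnj x = lam ^ (2 * v) * (lam ^ (2 * N - 2 * v) * t)"
    using t(2) by simp
  have "cnj x = cnj lam ^ v * cnj y" using y(2) by simp
  also have "cnj lam ^ v = (- cnj \<zeta>) ^ v * lam ^ v"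
    unfolding cnj_lam by (rule power_mult_distrib)
  finally have cnj_x: "cnj x = (- cnj \<zeta>) ^ v * lam ^ v * cnj y" .
  have "x * cnj x = (lam ^ v * y) * ((- cnj \<zeta>) ^ v * lam ^ v * cnj y)"
    by (subst cnj_x, subst y(2)) (rule refl)
  also have "\<dots> = lam ^ (2 * v) * ((- cnj \<zeta>) ^ v * (y * cnj y))"
    unfolding mult_2 power_add by (simp only: mult_ac)
  finally have "x * cnj x = \<dots>" .
  hence "(- cnj \<zeta>) ^ v * (y * cnj y) = lam ^ (2 * N - 2 * v) * t"
    using t' lam_nonzero by simp
  hence "(- \<zeta>) ^ v * (- cnj \<zeta>) ^ v * (y * cnj y) = (- \<zeta>) ^ v * (lam ^ (2 * N - 2 * v) * t)"
    by (simp add: mult.assoc)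
  moreover have "(- \<zeta>) ^ v * (- cnj \<zeta>) ^ v = 1"
    using cnj_zeta_mult_zeta by (simp add: power_mult_distrib[symmetric] mult.commute)
  moreover have "lam ^ (2 * N - 2 * v) = lam * lam ^ (2 * N - 2 * v - 1)"
    using v by (simp add: power_Suc[symmetric] Suc_diff_Suc)
  ultimately have "y * cnj y = lam * ((- \<zeta>) ^ v * lam ^ (2 * N - 2 * v - 1) * t)"
    by (simp add: ac_simps)
  moreover have "in_ring ((- \<zeta>) ^ v * lam ^ (2 * N - 2 * v - 1) * t)"
    using t(1) by (intro in_ring_mult in_ring_power in_ring_neg in_ring_zeta in_ring_lam)
  ultimately have "ring_dvd lam (y * cnj y)" unfolding ring_dvd_def by blast
  hence "ring_dvd lam y"
    using lam_prime y(1) in_ring_cnj lam_dvd_cnj by blast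
  then obtain s where "in_ring s" "y = lam * s" unfolding ring_dvd_def by blast
  thus ?thesis using y(2) unfolding ring_dvd_def by (metis mult.assoc power_Suc2)
qed

lemma two_dvd_of_mult_cnj_eq_four_power:
  assumes x: "in_ring x" and norm_x: "x * cnj x = 4 ^ m" and m: "m \<ge> 1"
  shows "\<exists>y. in_ring y \<and> x = 2 * y"
proof -
  have "ring_dvd (lam ^ v) x" if "v \<le> N" for v
    using that
  proof (induction v)
    case 0
    thus ?case using x by (simp add: ring_dvd_def)
  next
    case (Suc v)
    thus ?case using lam_power_dvd_step[OF norm_x m] by simp
  qed
  then obtain t where t: "in_ring t" "x = lam ^ N * t" unfolding ring_dvd_def by blast
  obtain w where w: "in_ring w" "lam ^ N = 2 * w" using lam_power_N_eq_2_mult by blast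
  have "x = 2 * (w * t)" using t w by simp
  thus ?thesis using in_ring_mult[OF w(1) t(1)] by blast
qed

lemma mult_cnj_eq_four_power_imp:
  "in_ring x \<Longrightarrow> x * cnj x = 4 ^ m \<Longrightarrow> \<exists>y. in_ring y \<and> x = 2 ^ m * y \<and> y * cnj y = 1"
proof (induction m arbitrary: x)
  case 0
  thus ?case by auto
next
  case (Suc m)
  obtain y where y: "in_ring y" "x = 2 * y" using two_dvd_of_mult_cnj_eq_four_power[OF Suc.prems] by auto
  have "4 * (y * cnj y) = 4 * 4 ^ m" using Suc.prems(2) y by (simp add: algebra_simps)
  hence "y * cnj y = 4 ^ m" by simp
  then obtain u where "in_ring u" "y = 2 ^ m * u" "u * cnj u = 1" using Suc.IH y by blast
  thus ?case using y by auto
qed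

definition constant_term_zero :: "complex \<Rightarrow> bool" where
  "constant_term_zero x \<longleftrightarrow> (\<exists>a. a 0 = 0 \<and> x = comb a)"

lemma constant_term_zero_0: "constant_term_zero 0"
  unfolding constant_term_zero_def by (rule exI[of _ "\<lambda>_. 0"]) (simp add: comb_def)

lemma constant_term_zero_add:
  assumes "constant_term_zero x" and "constant_term_zero y"
  shows "constant_term_zero (x + y)"
proof -
  obtain a b where "a 0 = 0" "x = comb a" "b 0 = 0" "y = comb b"
    using assms unfolding constant_term_zero_def by blast
  thus ?thesis unfolding constant_term_zero_def
    by (intro exI[of _ "\<lambda>j. a j + b j"]) (simp add: comb_add)
qed

lemma constant_term_zero_sum:
  "(\<And>i. i \<in> A \<Longrightarrow> constant_term_zero (f i)) \<Longrightarrow> constant_term_zero (sum f A)"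
  by (induction A rule: infinite_finite_induct)
    (simp_all add: constant_term_zero_0 constant_term_zero_add)

lemma constant_term_zero_single:
  assumes "1 \<le> d" and "d < N"
  shows "constant_term_zero (of_int c * \<zeta> ^ d)"
  unfolding constant_term_zero_def
proof (intro exI conjI)
  show "(\<lambda>i. if i = d then c else 0) 0 = 0" using assms(1) by simp
  show "of_int c * \<zeta> ^ d = comb (\<lambda>i. if i = d then c else 0)"
    using comb_single[OF assms(2)] by simp
qed

lemma cnj_zeta_power_mult: "cnj \<zeta> ^ j * \<zeta> ^ j = 1"
  using cnj_zeta_mult_zeta by (simp add: power_mult_distrib[symmetric])

lemma constant_term_zero_cross:
  assumes "i < N" and "j < N" and "i \<noteq> j"
  shows "constant_term_zero (of_int c * (\<zeta> ^ i * cnj \<zeta> ^ j))"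
proof (cases "j < i")
  case True
  have "\<zeta> ^ i = \<zeta> ^ (i - j) * \<zeta> ^ j" using True by (simp add: power_add[symmetric])
  hence "\<zeta> ^ i * cnj \<zeta> ^ j = \<zeta> ^ (i - j) * (cnj \<zeta> ^ j * \<zeta> ^ j)" by (simp only: mult_ac)
  hence "\<zeta> ^ i * cnj \<zeta> ^ j = \<zeta> ^ (i - j)" by (simp add: cnj_zeta_power_mult)
  thus ?thesis using constant_term_zero_single[of "i - j" c] True assms by simp
next
  case False
  define d where "d = j - i"
  have d: "1 \<le> d" "d < N" using False assms unfolding d_def by auto
  have "cnj \<zeta> ^ j = cnj \<zeta> ^ d * cnj \<zeta> ^ i"
    using False unfolding d_def by (simp add: power_add[symmetric])
  hence "\<zeta> ^ i * cnj \<zeta> ^ j = cnj \<zeta> ^ d * (cnj \<zeta> ^ i * \<zeta> ^ i)" by (simp only: mult_ac)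
  also have "\<dots> = cnj \<zeta> ^ d" by (simp add: cnj_zeta_power_mult)
  also have "\<dots> = \<zeta> ^ (2 * N - d)"
  proof -
    have "\<zeta> ^ (2 * N - d) * \<zeta> ^ d = \<zeta> ^ (2 * N)"
      using d by (simp add: power_add[symmetric])
    hence "\<zeta> ^ (2 * N - d) * \<zeta> ^ d = cnj \<zeta> ^ d * \<zeta> ^ d"
      by (simp add: zeta_pow_2N cnj_zeta_power_mult)
    thus ?thesis using zeta_nonzero by simp
  qed
  also have "\<dots> = \<zeta> ^ N * \<zeta> ^ (N - d)"
    using d by (simp add: power_add[symmetric] mult_2)
  finally have "of_int c * (\<zeta> ^ i * cnj \<zeta> ^ j) = of_int (- c) * \<zeta> ^ (N - d)"
    by (simp add: zeta_pow_N)
  thus ?thesis using constant_term_zero_single[of "N - d" "- c"] d by simp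
qed

(* The constant coefficient of y * cnj y is the sum of the squared coefficients of y:
   every cross term zeta^i * cnj zeta^j is +-zeta^d with 0 < d < N. *)
lemma sum_squares_eq_of_comb_mult_cnj:
  assumes "comb b * cnj (comb b) = of_int c"
  shows "(\<Sum>j<N. (b j)\<^sup>2) = c"
proof -
  let ?cross = "\<Sum>i<N. \<Sum>j\<in>{..<N} - {i}. of_int (b i * b j) * (\<zeta> ^ i * cnj \<zeta> ^ j)"
  have cnj_b: "cnj (comb b) = (\<Sum>j<N. of_int (b j) * cnj \<zeta> ^ j)" by (simp add: comb_def)
  have "comb b * cnj (comb b) = (\<Sum>i<N. \<Sum>j<N. of_int (b i * b j) * (\<zeta> ^ i * cnj \<zeta> ^ j))"
    unfolding cnj_b unfolding comb_def sum_product by (intro sum.cong refl) (simp add: algebra_simps)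
  also have "\<dots> = (\<Sum>i<N. of_int (b i * b i) * (\<zeta> ^ i * cnj \<zeta> ^ i) +
      (\<Sum>j\<in>{..<N} - {i}. of_int (b i * b j) * (\<zeta> ^ i * cnj \<zeta> ^ j)))"
    by (intro sum.cong refl) (simp add: sum.remove)
  also have "\<dots> = of_int (\<Sum>i<N. (b i)\<^sup>2) + ?cross"
    by (simp add: sum.distrib cnj_zeta_power_mult mult.commute[of "\<zeta> ^ _"] power2_eq_square)
  finally have expand: "comb b * cnj (comb b) = of_int (\<Sum>i<N. (b i)\<^sup>2) + ?cross" .
  have "constant_term_zero ?cross"
    by (intro constant_term_zero_sum constant_term_zero_cross) auto
  then obtain a where a: "a 0 = 0" "?cross = comb a" unfolding constant_term_zero_def by blast
  have "comb (\<lambda>j. a j + (if j = 0 then \<Sum>i<N. (b i)\<^sup>2 else 0)) = comb (\<lambda>j. if j = 0 then c else 0)"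
    using assms expand a(2) N_ge_2 by (simp add: comb_add[symmetric] comb_single add.commute)
  from comb_inject[OF this, of 0] show ?thesis using a(1) N_ge_2 by simp
qed

theorem norm_comb_eq_two_power_iff:
  "norm (comb a) = 2 ^ m \<longleftrightarrow>
    (\<exists>r<N. (a r = 2 ^ m \<or> a r = - (2 ^ m)) \<and> (\<forall>j<N. j \<noteq> r \<longrightarrow> a j = 0))"
proof
  assume norm_a: "norm (comb a) = 2 ^ m"
  have "comb a * cnj (comb a) = of_real ((norm (comb a))\<^sup>2)"
    by (rule complex_norm_square[symmetric])
  also have "\<dots> = 4 ^ m" using norm_a by (simp add: power_even_eq[symmetric] power_mult)
  finally obtain y where y: "in_ring y" "comb a = 2 ^ m * y" "y * cnj y = 1"
    using mult_cnj_eq_four_power_imp[of "comb a" m] in_ring_def by blast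
  obtain b where b: "y = comb b" using y(1) in_ring_def by blast
  have "comb a = comb (\<lambda>j. 2 ^ m * b j)" using y(2) b comb_scale[of "2 ^ m" b] by simp
  hence ab: "a j = 2 ^ m * b j" if "j < N" for j using comb_inject that by blast
  have "(\<Sum>j<N. (b j)\<^sup>2) = 1" using sum_squares_eq_of_comb_mult_cnj[of b 1] y(3) b by simp
  then obtain r where "r < N" "b r = 1 \<or> b r = -1" "\<forall>j<N. j \<noteq> r \<longrightarrow> b j = 0"
    using sum_squares_eq_1_int by blast
  thus "\<exists>r<N. (a r = 2 ^ m \<or> a r = - (2 ^ m)) \<and> (\<forall>j<N. j \<noteq> r \<longrightarrow> a j = 0)"
    using ab by (intro exI[of _ r]) auto
next
  assume "\<exists>r<N. (a r = 2 ^ m \<or> a r = - (2 ^ m)) \<and> (\<forall>j<N. j \<noteq> r \<longrightarrow> a j = 0)"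
  then obtain r where r: "r < N" "a r = 2 ^ m \<or> a r = - (2 ^ m)" "\<forall>j<N. j \<noteq> r \<longrightarrow> a j = 0"
    by blast
  have "comb a = comb (\<lambda>i. if i = r then a r else 0)"
    unfolding comb_def by (rule sum.cong) (use r(3) in auto)
  also have "\<dots> = of_int (a r) * \<zeta> ^ r" using comb_single r(1) by blast
  finally have "norm (comb a) = \<bar>a r\<bar>" by (simp add: norm_mult norm_power norm_zeta)
  thus "norm (comb a) = 2 ^ m" using r(2) by auto
qed

lemma zeta_2N_eq_power: "zeta (2 * N) a = \<zeta> ^ nat (a mod int (2 * N))"
proof -
  define r where "r = a mod int (2 * N)"
  have "r \<ge> 0" unfolding r_def using N_ge_2 by simp
  have "zeta (2 * N) a = cis (2 * pi * real_of_int (a div int (2 * N)) + real_of_int r * (pi / real N))"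
    unfolding zeta_def r_def using N_ge_2
    by (subst div_mult_mod_eq[of a "int (2 * N)", symmetric]) (rule arg_cong[where f = cis], simp add: field_simps)
  also have "\<dots> = cis (real (nat r) * (pi / real N))"
    using \<open>r \<ge> 0\<close> by (simp add: cis_mult[symmetric])
  also have "\<dots> = \<zeta> ^ nat r" unfolding \<zeta>_def Complex.DeMoivre by simp
  finally show ?thesis unfolding r_def .
qed

lemma fshift_eq_mod_2N:
  assumes "k = e + 1"
  shows "fshift k n f u x = (f x + int N * int (dotp n u x)) mod int (2 * N)"
proof -
  have q: "(2::int) ^ k = int (2 * N)" and N: "(2::int) ^ (k - 1) = int N"
    unfolding N_def assms by simp_all
  show ?thesis unfolding fshift_def q N by simp
qed

lemma gwht_summand_eq_zeta_power:
  assumes k: "k = e + 1"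
  shows "zeta (2 ^ k) (f x) * (-1) ^ dotp n u x = \<zeta> ^ nat (fshift k n f u x)"
proof -
  have "zeta (2 * N) (int N) = -1" unfolding zeta_def using N_ge_2 by simp
  moreover have "(2::nat) ^ k = 2 * N" unfolding N_def k by simp
  ultimately have "zeta (2 ^ k) (f x) * (-1) ^ dotp n u x = zeta (2 * N) (f x + int N * int (dotp n u x))"
    by (simp add: zeta_add zeta_mult_of_nat)
  thus ?thesis unfolding fshift_eq_mod_2N[OF k] zeta_2N_eq_power .
qed

(* Grouping the transform by the value j of f_u gives sum_{j<2N} b_j zeta^j, and zeta^N = -1
   folds the upper half onto the lower one. *)
lemma gwht_eq_comb:
  assumes k: "k = e + 1"
  shows "gwht (2 ^ k) n f u = comb (\<lambda>j. bcount k n f u (int j) - bcount k n f u (int N + int j))"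
proof -
  define g where "g x = fshift k n f u x" for x
  have g_nonneg: "g x \<ge> 0" for x
    unfolding g_def fshift_eq_mod_2N[OF k] using N_ge_2 by simp
  have g_less: "nat (g x) < 2 * N" for x
    unfolding g_def fshift_eq_mod_2N[OF k] using N_ge_2 by (simp add: nat_less_iff)
  have "gwht (2 ^ k) n f u = (\<Sum>x\<in>bvecs n. \<zeta> ^ nat (g x))"
    unfolding gwht_def g_def gwht_summand_eq_zeta_power[OF k] ..
  also have "\<dots> = (\<Sum>y<2 * N. \<Sum>x\<in>{x \<in> bvecs n. nat (g x) = y}. \<zeta> ^ nat (g x))"
    by (rule sum.group[symmetric]) (use finite_bvecs g_less in auto)
  also have "\<dots> = (\<Sum>y<2 * N. of_int (bcount k n f u (int y)) * \<zeta> ^ y)"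
  proof (rule sum.cong[OF refl])
    fix y
    have "{x \<in> bvecs n. nat (g x) = y} = {x \<in> bvecs n. fshift k n f u x = int y}"
      using g_nonneg unfolding g_def by (metis (mono_tags, lifting) nat_eq_iff)
    hence "(\<Sum>x\<in>{x \<in> bvecs n. nat (g x) = y}. \<zeta> ^ nat (g x)) =
        (\<Sum>x\<in>{x \<in> bvecs n. fshift k n f u x = int y}. \<zeta> ^ y)"
      unfolding g_def by (intro sum.cong) auto
    thus "(\<Sum>x\<in>{x \<in> bvecs n. nat (g x) = y}. \<zeta> ^ nat (g x)) = of_int (bcount k n f u (int y)) * \<zeta> ^ y"
      unfolding bcount_def by simp
  qed
  also have "\<dots> = (\<Sum>y<N. of_int (bcount k n f u (int y)) * \<zeta> ^ y) +
      (\<Sum>y<N. of_int (bcount k n f u (int (N + y))) * \<zeta> ^ (N + y))"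
    unfolding mult_2 by (rule sum_lessThan_add)
  also have "\<dots> = comb (\<lambda>j. bcount k n f u (int j) - bcount k n f u (int N + int j))"
    unfolding comb_def by (simp add: power_add zeta_pow_N sum_subtractf algebra_simps sum_negf)
  finally show ?thesis .
qed

lemma norm_comb_half_difference_iff:
  fixes b :: "int \<Rightarrow> int"
  shows "norm (comb (\<lambda>j. b (int j) - b (int N + int j))) = 2 ^ m \<longleftrightarrow>
    (\<exists>\<rho>. 0 \<le> \<rho> \<and> \<rho> \<le> int N - 1 \<and>
       (b (int N + \<rho>) = b \<rho> + 2 ^ m \<or> b (int N + \<rho>) = b \<rho> - 2 ^ m) \<and>
       (\<forall>j. 0 \<le> j \<and> j \<le> int N - 1 \<and> j \<noteq> \<rho> \<longrightarrow> b (int N + j) = b j))"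
    (is "_ \<longleftrightarrow> (\<exists>\<rho>. ?P \<rho>)")
  unfolding norm_comb_eq_two_power_iff
proof
  assume "\<exists>r<N. (b (int r) - b (int N + int r) = 2 ^ m \<or> b (int r) - b (int N + int r) = - (2 ^ m)) \<and>
    (\<forall>j<N. j \<noteq> r \<longrightarrow> b (int j) - b (int N + int j) = 0)"
  then obtain r where r: "r < N"
    "b (int r) - b (int N + int r) = 2 ^ m \<or> b (int r) - b (int N + int r) = - (2 ^ m)"
    "\<forall>j<N. j \<noteq> r \<longrightarrow> b (int j) - b (int N + int j) = 0" by blast
  have "?P (int r)"
  proof (intro conjI allI impI)
    fix j :: int assume j: "0 \<le> j \<and> j \<le> int N - 1 \<and> j \<noteq> int r"
    hence "b (int (nat j)) - b (int N + int (nat j)) = 0" using r(3) by (metis nat_eq_iff2 nat_less_iff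
        zle_diff1_eq not_le less_le)
    thus "b (int N + j) = b j" using j by simp
  qed (use r in auto)
  thus "\<exists>\<rho>. ?P \<rho>" ..
next
  assume "\<exists>\<rho>. ?P \<rho>"
  then obtain \<rho> where \<rho>: "?P \<rho>" ..
  show "\<exists>r<N. (b (int r) - b (int N + int r) = 2 ^ m \<or> b (int r) - b (int N + int r) = - (2 ^ m)) \<and>
    (\<forall>j<N. j \<noteq> r \<longrightarrow> b (int j) - b (int N + int j) = 0)"
    using \<rho> by (intro exI[of _ "nat \<rho>"]) (auto simp: nat_eq_iff)
qed

end

theorem mainTheorem3:
  fixes k m n :: nat and f :: "(nat \<Rightarrow> bool) \<Rightarrow> int"
  assumes "k > 1" and "n = 2 * m"
  shows "gbent (2 ^ k) n f \<longleftrightarrow>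
    (\<forall>u\<in>bvecs n. \<exists>\<rho>::int. 0 \<le> \<rho> \<and> \<rho> \<le> 2 ^ (k - 1) - 1 \<and>
       (bcount k n f u (2 ^ (k - 1) + \<rho>) = bcount k n f u \<rho> + 2 ^ m \<or>
        bcount k n f u (2 ^ (k - 1) + \<rho>) = bcount k n f u \<rho> - 2 ^ m) \<and>
       (\<forall>j::int. 0 \<le> j \<and> j \<le> 2 ^ (k - 1) - 1 \<and> j \<noteq> \<rho> \<longrightarrow>
          bcount k n f u (2 ^ (k - 1) + j) = bcount k n f u j))"
proof -
  interpret two_power_cyclotomic "k - 1" using assms(1) by unfold_locales simp
  have N: "(2::int) ^ (k - 1) = int N" unfolding N_def by simp
  have k: "k = (k - 1) + 1" using assms(1) by simp
  have "sqrt (2 ^ n) = sqrt (((2::real) ^ m)\<^sup>2)"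
    unfolding assms(2) by (simp add: power_mult[symmetric] mult.commute)
  hence sqrt_2n: "sqrt (2 ^ n) = (2::real) ^ m" by simp
  show ?thesis
    unfolding gbent_def N gwht_eq_comb[OF k] sqrt_2n norm_comb_half_difference_iff ..
qed

end
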